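(* In the setting and notation described in the context, suppose that $\Delta_{2,n},\Delta_{p_0+1,n},\Delta_{p_0+M-1,n},\Delta_{p_0,n}$ are each $O(n^{-\gamma_0})$, $\eta_n=O(n^{-\gamma_1})$, $V_{1n}=O(n^{\gamma_2})$, $V_{2n}=O(n^{\gamma_3})$, $C_{1n}=O(n^{\gamma_4})$, $C_{2n}=O(n^{\gamma_5})$, $C_{3n}=O(n^{\gamma_6})$, $C_{4n}=O(n^{\gamma_7})$, $p_0=O(n^{\gamma_8})$, $M=O(n^{\gamma_9})$, where $\gamma_1,\gamma_8,\gamma_9>0$, $\gamma_8<\gamma_9$, $3\gamma_9<\gamma_0$, $\gamma_9<2\gamma_1$, $\gamma_7<\gamma_1$, $\gamma_6<\gamma_1$, $\gamma_2<\gamma_0$, $\gamma_3<\gamma_0$, $3\gamma_9+\gamma_4<\gamma_0$, $3\gamma_9<\gamma_1$, $6\gamma_9+\gamma_5<\gamma_0$, $3\gamma_8+\gamma_4+\gamma_6<\gamma_0$, $3\gamma_8+\gamma_6<\gamma_1$, $6\gamma_8+\gamma_5+\gamma_6<\gamma_0$, $3\gamma_9+\gamma_4+\gamma_7<\gamma_0$, $3\gamma_9+\gamma_7<\gamma_1$, $6\gamma_9+\gamma_5+\gamma_7<\gamma_0$. Then there exist constants $\alpha\in(0,1)$ and $D>0$ such that, for all sufficiently large $n$, (i) $3(M+1)^2(9M+1)\Delta_{2,n}<\alpha$, and (ii) $12\tau^2-12(M-p_0+1)\eta_n^2-4\eta_n^2-4\eta_n(C_{4n}+C_{3n})-\Delta_{p_0,n}V_{1n}-\Delta_{p_0+M-1,n}V_{2n}-\rho_{1n}-\rho_{2n}>D$,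 where $\rho_{1n},\rho_{2n}$ are computed with this $\alpha$.
   Context: Setting. $n=1,2,\ldots$ indexes a sequence of problems. For each $n$ we are given integers $p=p_n$, $p_0=p_{0,n}$, $M=M_n$ with $1\le p_0\le M$ and $p_0<p$; a continuous function $f_n:[0,1]^p\to\mathbb{R}$; design points $\mathbf{x}_i=(x_{i1},\ldots,x_{ip})'\in[0,1)^p$, $i=1,\ldots,n$; a function $\widetilde f_n\in C[0,1]^{p_0}$; a number $\eta_n>0$; and a positive constant $\tau$. Let $\mathbf{X}$ be the $n\times p$ matrix with rows $\mathbf{x}_i'$. Let $Z_d=\{1,\ldots,d\}$, $\mathcal{A}_0=Z_{p_0}$. For $\mathcal{A}\subset Z_p$, $\mathbf{x}_{\mathcal{A}}$ is the subvector of $\mathbf{x}\in[0,1]^p$ with coordinates in $\mathcal{A}$ and $\mathbf{X}_{\mathcal{A}}$ the submatrix of $\mathbf{X}$ with columns in $\mathcal{A}$. $a_n=O(n^{\gamma})$ means $|a_n|\le cn^{\gamma}$ for some constant $c$ and all large $n$. Subset best linear approximation: for $\mathcal{A}\subset Z_p$, $(\beta_0(\mathcal{A}),\boldsymbol{\beta}(\mathcal{A})')'\in\mathbb{R}\times\mathbb{R}^{|\mathcal{A}|}$ minimizes $\int_{[0,1]^p}[f_n(\mathbf{x})-\phi_0-\boldsymbol{\phi}'\mathbf{x}_{\mathcal{A}}]^2d\mathbf{x}$ over $(\phi_0,\boldsymbol\phi)$; $\boldsymbol{\beta}_{Z_p}(\mathcal{A})\in\mathbb{R}^p$ has coordinates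 indexed by $\mathcal{A}$ equal to $\boldsymbol\beta(\mathcal{A})$ and all others $0$. Hardy–Krause variation: for $g:[0,1]^d\to\mathbb{R}$ and an axis-parallel rectangle $J$, $\Delta_J(g)$ is the sum of values of $g$ at the $2^d$ vertices of $J$ with alternating signs at nearest-neighbour vertices; $V^{Vit}(g)=\sup_\Pi\sum_{J\in\Pi}|\Delta_J(g)|$ over partitions $\Pi$ of $[0,1]^d$ into finitely many non-overlapping axis-parallel sub-rectangles; $V_{HK}(g)=\sum_{\emptyset\ne u\subset Z_d}V^{Vit}(g_u)$ where $g_u$ is $g$ with $x_k=1$ for $k\notin u$, as a function of $\mathbf{x}_u$. Functions depending on some coordinates of $\mathbf{x}\in[0,1]^p$ are regarded as functions on $[0,1]^p$. Discrepancy: for an $m\times d$ matrix $\mathbf{A}$ with rows $\mathbf{a}_i'\in[0,1]^d$, $\delta_{d,m}(\mathbf{A})=\sup_{\mathbf{x}\in[0,1]^d}|F_m(\mathbf{x})-\prod_{k=1}^dx_k|$, $F_m(\mathbf{x})=\frac1m\#\{i:a_{ik}\le x_k\ \forall k\}$. Sets: $\mathcal{U}_1=\{\mathcal{A}\subset Z_p:|\mathcal{A}|=M,\mathcal{A}_0\setminus\mathcal{A}\neq\emptyset\}$; $\mathcal{U}_2=\{\mathcal{A}\subset Z_p:|\mathcal{A}|=2\}$; $\mathcal{U}_3=\{\mathcal{A}_0\cup I_1:I_1\subset Z_p\setminus\mathcal{A}_0,|I_1|=1\}$; $\mathcal{U}_4=\{\mathcal{A}_0\cup I_2:I_2\subset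 Z_p\setminus\mathcal{A}_0,|I_2|=M-1\}$. $\Delta_{p_0,n}=\delta_{p_0,n}(\mathbf{X}_{\mathcal{A}_0})$, $\Delta_{2,n}=\max_{\mathcal{A}\in\mathcal{U}_2}\delta_{2,n}(\mathbf{X}_{\mathcal{A}})$, $\Delta_{p_0+1,n}=\max_{\mathcal{A}\in\mathcal{U}_3}\delta_{p_0+1,n}(\mathbf{X}_{\mathcal{A}})$, $\Delta_{p_0+M-1,n}=\max_{\mathcal{A}\in\mathcal{U}_4}\delta_{p_0+M-1,n}(\mathbf{X}_{\mathcal{A}})$. Constants: $C_{1n}=\max_{j=1,\ldots,p}\max(V_{HK}(\widetilde f_n),V_{HK}(x_j\widetilde f_n))$; $C_{2n}=\max_{\mathbf{x}\in[0,1]^p}|f_n(\mathbf{x})|$; $C_{3n}=\max_{\mathbf{x}\in[0,1]^p}|\widetilde f_n(\mathbf{x}_{\mathcal{A}_0})-\mathbf{x}'\boldsymbol\beta_{Z_p}(\mathcal{A}_0)-\beta_0(\mathcal{A}_0)|$; $C_{4n}=\max_{\mathcal{A}\in\mathcal{U}_1}\max_{\mathbf{x}\in[0,1]^p}|\widetilde f_n(\mathbf{x}_{\mathcal{A}_0})-\mathbf{x}'\boldsymbol\beta_{Z_p}(\mathcal{A})-\beta_0(\mathcal{A})|$; $V_{1n}=V_{HK}(\widetilde f_n(\mathbf{x}_{\mathcal{A}_0})-\beta_0(\mathcal{A}_0)-\mathbf{x}'\boldsymbol\beta_{Z_p}(\mathcal{A}_0))$; $V_{2n}=\max_{\mathcal{A}\in\mathcal{U}_1}V_{HK}(\widetilde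 f_n(\mathbf{x}_{\mathcal{A}_0})-\beta_0(\mathcal{A})-\mathbf{x}'\boldsymbol\beta_{Z_p}(\mathcal{A}))$. For $\alpha\in(0,1)$: $\zeta_{1n}=C_{1n}(p_0+1)^2(9p_0+1)\Delta_{p_0,n}+2(p_0+1)^2(9p_0+1)\eta_n+\frac{3}{1-\alpha}C_{2n}(p_0+1)^4(9p_0+1)^2\Delta_{2,n}$; $\zeta_{2n}=C_{1n}(M+1)^2(9M+1)\Delta_{p_0+1,n}+2(M+1)^2(9M+1)\eta_n+\frac{3}{1-\alpha}C_{2n}(M+1)^4(9M+1)^2\Delta_{2,n}$; $\rho_{1n}=\zeta_{1n}^2+2(C_{3n}+\eta_n)\zeta_{1n}+2(p_0+1)^{-1/2}\zeta_{1n}^2$; $\rho_{2n}=\zeta_{2n}^2+2(C_{4n}+\eta_n)\zeta_{2n}+2(M+1)^{-1/2}\zeta_{2n}^2$. *)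

theory Defs
  imports "HOL-Probability.Probability" "HOL-Library.Landau_Symbols"
begin

text \<open>Points of [0,1]^I are extensional functions nat => real, defined on the
  coordinate index set I (undefined outside I).  Z_d = {1..d}.\<close>

definition cube :: "nat set \<Rightarrow> (nat \<Rightarrow> real) set" where
  "cube I = PiE I (\<lambda>_. {0..1})"

definition unifcube :: "nat \<Rightarrow> (nat \<Rightarrow> real) measure" where
  "unifcube p = PiM {1..p} (\<lambda>_. uniform_measure lborel {0..1::real})"

definition lin :: "nat \<Rightarrow> (nat \<Rightarrow> real) \<Rightarrow> (nat \<Rightarrow> real) \<Rightarrow> real" where
  "lin p b x = (\<Sum>j\<in>{1..p}. x j * b j)"

definition l2err :: "((nat \<Rightarrow> real) \<Rightarrow> real) \<Rightarrow> nat \<Rightarrow> nat set \<Rightarrow> real \<Rightarrow> (nat \<Rightarrow> real) \<Rightarrow> real" where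
  "l2err f p A c0 c = (\<integral>x. (f x - c0 - (\<Sum>j\<in>A. c j * x j))\<^sup>2 \<partial>unifcube p)"

definition is_best_lin :: "((nat \<Rightarrow> real) \<Rightarrow> real) \<Rightarrow> nat \<Rightarrow> nat set \<Rightarrow> real \<Rightarrow> (nat \<Rightarrow> real) \<Rightarrow> bool" where
  "is_best_lin f p A b0 b \<longleftrightarrow> (\<forall>j. j \<notin> A \<longrightarrow> b j = 0) \<and>
     (\<forall>c0 c. l2err f p A b0 b \<le> l2err f p A c0 c)"

definition best_lin :: "((nat \<Rightarrow> real) \<Rightarrow> real) \<Rightarrow> nat \<Rightarrow> nat set \<Rightarrow> real \<times> (nat \<Rightarrow> real)" where
  "best_lin f p A = (SOME bb. is_best_lin f p A (fst bb) (snd bb))"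

definition beta0 :: "((nat \<Rightarrow> real) \<Rightarrow> real) \<Rightarrow> nat \<Rightarrow> nat set \<Rightarrow> real" where
  "beta0 f p A = fst (best_lin f p A)"

definition betaZ :: "((nat \<Rightarrow> real) \<Rightarrow> real) \<Rightarrow> nat \<Rightarrow> nat set \<Rightarrow> nat \<Rightarrow> real" where
  "betaZ f p A = snd (best_lin f p A)"

definition rect_delta :: "nat set \<Rightarrow> ((nat \<Rightarrow> real) \<Rightarrow> real) \<Rightarrow> (nat \<Rightarrow> real) \<Rightarrow> (nat \<Rightarrow> real) \<Rightarrow> real" where
  "rect_delta I g a b = (\<Sum>S\<in>Pow I. (-1) ^ card S * g (restrict (\<lambda>k. if k \<in> S then a k else b k) I))"

definition is_rect_partition :: "nat set \<Rightarrow> ((nat \<Rightarrow> real) \<times> (nat \<Rightarrow> real)) set \<Rightarrow> bool" where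
  "is_rect_partition I P \<longleftrightarrow> finite P \<and>
     (\<forall>(a,b)\<in>P. a \<in> extensional I \<and> b \<in> extensional I \<and> (\<forall>k\<in>I. 0 \<le> a k \<and> a k \<le> b k \<and> b k \<le> 1)) \<and>
     (\<Union>(a,b)\<in>P. PiE I (\<lambda>k. {a k..b k})) = cube I \<and>
     (\<forall>(a,b)\<in>P. \<forall>(a',b')\<in>P. (a,b) \<noteq> (a',b') \<longrightarrow>
        (\<exists>k\<in>I. min (b k) (b' k) \<le> max (a k) (a' k)))"

definition vitali :: "nat set \<Rightarrow> ((nat \<Rightarrow> real) \<Rightarrow> real) \<Rightarrow> ereal" where
  "vitali I g = (SUP P\<in>{P. is_rect_partition I P}. ereal (\<Sum>(a,b)\<in>P. \<bar>rect_delta I g a b\<bar>))"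

definition VHK :: "nat set \<Rightarrow> ((nat \<Rightarrow> real) \<Rightarrow> real) \<Rightarrow> ereal" where
  "VHK I g = (\<Sum>u\<in>{u. u \<subseteq> I \<and> u \<noteq> {}}.
      vitali u (\<lambda>y. g (restrict (\<lambda>k. if k \<in> u then y k else 1) I)))"

text \<open>Star discrepancy of the first m rows of X (X i k = entry in row i, column k),
  restricted to the columns in A.\<close>
definition discrepancy :: "nat set \<Rightarrow> nat \<Rightarrow> (nat \<Rightarrow> nat \<Rightarrow> real) \<Rightarrow> real" where
  "discrepancy A m X = (SUP y\<in>cube A.
      \<bar>real (card {i\<in>{1..m}. \<forall>k\<in>A. X i k \<le> y k}) / real m - (\<Prod>k\<in>A. y k)\<bar>)"

definition max0 :: "real set \<Rightarrow> real" where
  "max0 S = (if S = {} then 0 else Sup S)"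

definition emax0 :: "ereal set \<Rightarrow> ereal" where
  "emax0 S = (if S = {} then 0 else Sup S)"

definition U1 :: "nat \<Rightarrow> nat \<Rightarrow> nat \<Rightarrow> nat set set" where
  "U1 p p0 M = {A. A \<subseteq> {1..p} \<and> card A = M \<and> {1..p0} - A \<noteq> {}}"
definition U2 :: "nat \<Rightarrow> nat set set" where
  "U2 p = {A. A \<subseteq> {1..p} \<and> card A = 2}"
definition U3 :: "nat \<Rightarrow> nat \<Rightarrow> nat set set" where
  "U3 p p0 = {{1..p0} \<union> I1 | I1. I1 \<subseteq> {1..p} - {1..p0} \<and> card I1 = 1}"
definition U4 :: "nat \<Rightarrow> nat \<Rightarrow> nat \<Rightarrow> nat set set" where
  "U4 p p0 M = {{1..p0} \<union> I2 | I2. I2 \<subseteq> {1..p} - {1..p0} \<and> card I2 = M - 1}"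

definition Delta_p0 :: "nat \<Rightarrow> nat \<Rightarrow> (nat \<Rightarrow> nat \<Rightarrow> real) \<Rightarrow> real" where
  "Delta_p0 p0 n X = discrepancy {1..p0} n X"
definition Delta_2 :: "nat \<Rightarrow> nat \<Rightarrow> (nat \<Rightarrow> nat \<Rightarrow> real) \<Rightarrow> real" where
  "Delta_2 p n X = max0 ((\<lambda>A. discrepancy A n X) ` U2 p)"
definition Delta_p0p1 :: "nat \<Rightarrow> nat \<Rightarrow> nat \<Rightarrow> (nat \<Rightarrow> nat \<Rightarrow> real) \<Rightarrow> real" where
  "Delta_p0p1 p p0 n X = max0 ((\<lambda>A. discrepancy A n X) ` U3 p p0)"
definition Delta_p0M1 :: "nat \<Rightarrow> nat \<Rightarrow> nat \<Rightarrow> nat \<Rightarrow> (nat \<Rightarrow> nat \<Rightarrow> real) \<Rightarrow> real" where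
  "Delta_p0M1 p p0 M n X = max0 ((\<lambda>A. discrepancy A n X) ` U4 p p0 M)"

definition onA0 :: "nat \<Rightarrow> ((nat \<Rightarrow> real) \<Rightarrow> real) \<Rightarrow> (nat \<Rightarrow> real) \<Rightarrow> real" where
  "onA0 p0 ft = (\<lambda>x. ft (restrict x {1..p0}))"

definition resid :: "((nat \<Rightarrow> real) \<Rightarrow> real) \<Rightarrow> nat \<Rightarrow> nat \<Rightarrow> ((nat \<Rightarrow> real) \<Rightarrow> real) \<Rightarrow> nat set
     \<Rightarrow> (nat \<Rightarrow> real) \<Rightarrow> real" where
  "resid f p p0 ft A = (\<lambda>x. onA0 p0 ft x - lin p (betaZ f p A) x - beta0 f p A)"

definition C1 :: "nat \<Rightarrow> nat \<Rightarrow> ((nat \<Rightarrow> real) \<Rightarrow> real) \<Rightarrow> ereal" where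
  "C1 p p0 ft = Max ((\<lambda>j. max (VHK {1..p} (onA0 p0 ft)) (VHK {1..p} (\<lambda>x. x j * onA0 p0 ft x))) ` {1..p})"
definition C2 :: "nat \<Rightarrow> ((nat \<Rightarrow> real) \<Rightarrow> real) \<Rightarrow> real" where
  "C2 p f = (SUP x\<in>cube {1..p}. \<bar>f x\<bar>)"
definition C3 :: "((nat \<Rightarrow> real) \<Rightarrow> real) \<Rightarrow> nat \<Rightarrow> nat \<Rightarrow> ((nat \<Rightarrow> real) \<Rightarrow> real) \<Rightarrow> real" where
  "C3 f p p0 ft = (SUP x\<in>cube {1..p}. \<bar>resid f p p0 ft {1..p0} x\<bar>)"
definition C4 :: "((nat \<Rightarrow> real) \<Rightarrow> real) \<Rightarrow> nat \<Rightarrow> nat \<Rightarrow> nat \<Rightarrow> ((nat \<Rightarrow> real) \<Rightarrow> real) \<Rightarrow> real" where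
  "C4 f p p0 M ft = max0 ((\<lambda>A. SUP x\<in>cube {1..p}. \<bar>resid f p p0 ft A x\<bar>) ` U1 p p0 M)"
definition V1 :: "((nat \<Rightarrow> real) \<Rightarrow> real) \<Rightarrow> nat \<Rightarrow> nat \<Rightarrow> ((nat \<Rightarrow> real) \<Rightarrow> real) \<Rightarrow> ereal" where
  "V1 f p p0 ft = VHK {1..p} (resid f p p0 ft {1..p0})"
definition V2 :: "((nat \<Rightarrow> real) \<Rightarrow> real) \<Rightarrow> nat \<Rightarrow> nat \<Rightarrow> nat \<Rightarrow> ((nat \<Rightarrow> real) \<Rightarrow> real) \<Rightarrow> ereal" where
  "V2 f p p0 M ft = emax0 ((\<lambda>A. VHK {1..p} (resid f p p0 ft A)) ` U1 p p0 M)"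

text \<open>zeta_{1n} (q = p0, Da = Delta_{p0,n}) and zeta_{2n} (q = M, Da = Delta_{p0+1,n}).\<close>
definition zeta :: "real \<Rightarrow> real \<Rightarrow> real \<Rightarrow> real \<Rightarrow> real \<Rightarrow> real \<Rightarrow> nat \<Rightarrow> real" where
  "zeta \<alpha> c1 c2 Da D2 eta q =
     c1 * (real q + 1)^2 * (9 * real q + 1) * Da + 2 * (real q + 1)^2 * (9 * real q + 1) * eta
     + 3 / (1 - \<alpha>) * c2 * (real q + 1)^4 * (9 * real q + 1)^2 * D2"

text \<open>rho_{1n} (C = C3, q = p0) and rho_{2n} (C = C4, q = M).\<close>
definition rho :: "real \<Rightarrow> real \<Rightarrow> real \<Rightarrow> nat \<Rightarrow> real" where
  "rho z c eta q = z^2 + 2 * (c + eta) * z + 2 * (1 / sqrt (real q + 1)) * z^2"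

definition ereal_bigO :: "(nat \<Rightarrow> ereal) \<Rightarrow> real \<Rightarrow> bool" where
  "ereal_bigO a \<gamma> \<longleftrightarrow> (\<exists>c. \<forall>\<^sub>F n in sequentially. \<bar>a n\<bar> \<le> ereal (c * real n powr \<gamma>))"

end

theory Submission
  imports Defs
begin

text \<open>Take \<open>\<alpha> = 1/2\<close> and \<open>D = 6\<tau>\<^sup>2\<close>. Every quantity subtracted from \<open>12\<tau>\<^sup>2\<close> in (ii), and the
  left-hand side of (i), is a finite sum of products of sequences that are \<open>O(n\<^sup>a)\<close> for exponents
  adding up to a negative number; the rate hypotheses say exactly this. So all of them tend to \<open>0\<close>,
  whence (i) and (ii) hold eventually.\<close>

definition zeta_factor :: "nat \<Rightarrow> real" where
  "zeta_factor q = (real q + 1)^2 * (9 * real q + 1)"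

lemma bigo_tendsto_zero:
  fixes f g :: "'a \<Rightarrow> real"
  assumes "f \<in> O[F](g)" and "(g \<longlongrightarrow> 0) F"
  shows "(f \<longlongrightarrow> 0) F"
proof -
  obtain c where "eventually (\<lambda>x. norm (f x) \<le> c * norm (g x)) F"
    using landau_o.bigE[OF assms(1)] by blast
  moreover have "((\<lambda>x. c * norm (g x)) \<longlongrightarrow> 0) F"
    by (intro tendsto_mult_right_zero tendsto_norm_zero assms(2))
  ultimately show ?thesis
    by (rule Lim_null_comparison)
qed

lemma powr_bigo_tendsto_zero:
  fixes f :: "nat \<Rightarrow> real"
  assumes "f \<in> O(\<lambda>n. real n powr e)" and "e < 0"
  shows "f \<longlonglongrightarrow> 0"
  using assms(1) by (rule bigo_tendsto_zero) (intro tendsto_neg_powr assms(2) filterlim_real_sequentially)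

lemma powr_bigo_mult:
  fixes f g :: "nat \<Rightarrow> real"
  assumes "f \<in> O(\<lambda>n. real n powr a)" and "g \<in> O(\<lambda>n. real n powr b)"
  shows "(\<lambda>n. f n * g n) \<in> O(\<lambda>n. real n powr (a + b))"
  using landau_o.big_mult[OF assms] by (simp add: powr_add)

lemma powr_bigo_mult_tendsto_zero:
  fixes f g :: "nat \<Rightarrow> real"
  assumes "f \<in> O(\<lambda>n. real n powr a)" and "g \<in> O(\<lambda>n. real n powr b)" and "a + b < 0"
  shows "(\<lambda>n. f n * g n) \<longlonglongrightarrow> 0"
  using powr_bigo_mult[OF assms(1,2)] assms(3) by (rule powr_bigo_tendsto_zero)

lemma ereal_bigO_imp_bigo:
  assumes "ereal_bigO a g"
  shows "(\<lambda>n. real_of_ereal (a n)) \<in> O(\<lambda>n. real n powr g)"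
proof -
  obtain c where "\<forall>\<^sub>F n in sequentially. \<bar>a n\<bar> \<le> ereal (c * real n powr g)"
    using assms unfolding ereal_bigO_def by blast
  then have "\<forall>\<^sub>F n in sequentially. norm (real_of_ereal (a n)) \<le> (\<bar>c\<bar> + 1) * norm (real n powr g)"
  proof eventually_elim
    case (elim n)
    then have "\<bar>real_of_ereal (a n)\<bar> \<le> c * real n powr g"
      by (cases "a n") auto
    also have "\<dots> \<le> (\<bar>c\<bar> + 1) * norm (real n powr g)"
      by (intro mult_mono) auto
    finally show ?case by simp
  qed
  then show ?thesis
    by (intro landau_o.bigI[of "\<bar>c\<bar> + 1"]) auto
qed

lemma zeta_factor_bigo:
  fixes q :: "nat \<Rightarrow> nat"
  assumes "(\<lambda>n. real (q n)) \<in> O(\<lambda>n. real n powr g)" and "\<forall>\<^sub>F n in sequentially. 1 \<le> q n"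
  shows "(\<lambda>n. zeta_factor (q n)) \<in> O(\<lambda>n. real n powr (3 * g))"
proof -
  have "\<forall>\<^sub>F n in sequentially. norm (zeta_factor (q n)) \<le> 40 * norm (real (q n) ^ 3)"
    using assms(2)
  proof eventually_elim
    case (elim n)
    then have "zeta_factor (q n) \<le> (2 * real (q n))^2 * (10 * real (q n))"
      unfolding zeta_factor_def by (intro mult_mono power_mono) auto
    then show ?case
      by (simp add: power3_eq_cube power2_eq_square zeta_factor_def)
  qed
  then have "(\<lambda>n. zeta_factor (q n)) \<in> O(\<lambda>n. real (q n) ^ 3)"
    by (intro landau_o.bigI[of 40]) auto
  also have "(\<lambda>n. real (q n) ^ 3) \<in> O(\<lambda>n. (real n powr g) ^ 3)"
    by (rule landau_o.big_power[OF assms(1)])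
  finally show ?thesis
    by (simp add: powr_realpow' powr_powr mult.commute flip: powr_powr)
qed

lemma zeta_eq:
  "zeta \<alpha> c1 c2 Da D2 eta q =
     c1 * zeta_factor q * Da + 2 * (zeta_factor q * eta) + 3 / (1 - \<alpha>) * (c2 * (zeta_factor q)^2 * D2)"
  unfolding zeta_def zeta_factor_def by algebra

text \<open>Scaling \<open>\<zeta>\<close> by \<open>c\<close> amounts to scaling \<open>c1\<close>, \<open>c2\<close> and \<open>\<eta>\<close>, so the cross term \<open>c \<zeta>\<close> of
  \<open>\<rho>\<close> is again a \<open>\<zeta>\<close> and tends to \<open>0\<close> under correspondingly shifted rate conditions.\<close>

lemma mult_zeta:
  "c * zeta \<alpha> c1 c2 Da D2 eta q = zeta \<alpha> (c * c1) (c * c2) Da D2 (c * eta) q"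
  by (simp add: zeta_def algebra_simps)

lemma zeta_tendsto_zero:
  fixes c1 c2 Da D2 eta :: "nat \<Rightarrow> real" and q :: "nat \<Rightarrow> nat"
  assumes c1: "c1 \<in> O(\<lambda>n. real n powr a1)" and c2: "c2 \<in> O(\<lambda>n. real n powr a2)"
    and Da: "Da \<in> O(\<lambda>n. real n powr da)" and D2: "D2 \<in> O(\<lambda>n. real n powr d2)"
    and eta: "eta \<in> O(\<lambda>n. real n powr b)"
    and q: "(\<lambda>n. real (q n)) \<in> O(\<lambda>n. real n powr g)" "\<forall>\<^sub>F n in sequentially. 1 \<le> q n"
    and rates: "a1 + 3 * g + da < 0" "3 * g + b < 0" "a2 + 6 * g + d2 < 0"
  shows "(\<lambda>n. zeta \<alpha> (c1 n) (c2 n) (Da n) (D2 n) (eta n) (q n)) \<longlonglongrightarrow> 0"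
proof -
  have factor: "(\<lambda>n. zeta_factor (q n)) \<in> O(\<lambda>n. real n powr (3 * g))"
    by (rule zeta_factor_bigo[OF q])
  have factor_sq: "(\<lambda>n. (zeta_factor (q n))^2) \<in> O(\<lambda>n. real n powr (3 * g + 3 * g))"
    using powr_bigo_mult[OF factor factor] by (simp add: power2_eq_square)
  have "(\<lambda>n. c1 n * zeta_factor (q n) * Da n) \<longlonglongrightarrow> 0"
    by (rule powr_bigo_mult_tendsto_zero[OF powr_bigo_mult[OF c1 factor] Da]) (use rates in linarith)
  moreover have "(\<lambda>n. zeta_factor (q n) * eta n) \<longlonglongrightarrow> 0"
    by (rule powr_bigo_mult_tendsto_zero[OF factor eta]) (use rates in linarith)
  moreover have "(\<lambda>n. c2 n * (zeta_factor (q n))^2 * D2 n) \<longlonglongrightarrow> 0"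
    by (rule powr_bigo_mult_tendsto_zero[OF powr_bigo_mult[OF c2 factor_sq] D2]) (use rates in linarith)
  ultimately show ?thesis
    unfolding zeta_eq by (intro tendsto_add_zero tendsto_mult_right_zero)
qed

lemma rho_tendsto_zero:
  fixes z c eta :: "nat \<Rightarrow> real" and q :: "nat \<Rightarrow> nat"
  assumes z: "z \<longlonglongrightarrow> 0" and cz: "(\<lambda>n. c n * z n) \<longlonglongrightarrow> 0" and eta: "eta \<longlonglongrightarrow> 0"
  shows "(\<lambda>n. rho (z n) (c n) (eta n) (q n)) \<longlonglongrightarrow> 0"
proof -
  have z2: "(\<lambda>n. (z n)^2) \<longlonglongrightarrow> 0"
    using tendsto_mult_zero[OF z z] by (simp add: power2_eq_square)
  have "(\<lambda>n. 1 / sqrt (real (q n) + 1) * (z n)^2) \<longlonglongrightarrow> 0"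
  proof (rule Lim_null_comparison[OF always_eventually z2], intro allI)
    fix n
    show "norm (1 / sqrt (real (q n) + 1) * (z n)^2) \<le> (z n)^2"
      using mult_left_le_one_le[of "(z n)^2" "1 / sqrt (real (q n) + 1)"] by simp
  qed
  moreover have "(\<lambda>n. eta n * z n) \<longlonglongrightarrow> 0"
    by (rule tendsto_mult_zero[OF eta z])
  moreover have "rho (z n) (c n) (eta n) (q n) =
      (z n)^2 + 2 * (c n * z n) + 2 * (eta n * z n) + 2 * (1 / sqrt (real (q n) + 1) * (z n)^2)" for n
    by (simp add: rho_def algebra_simps)
  ultimately show ?thesis
    using z2 cz by (simp only:) (intro tendsto_add_zero tendsto_mult_right_zero)
qed

lemma rho_zeta_tendsto_zero:
  fixes c1 c2 c Da D2 eta :: "nat \<Rightarrow> real" and q :: "nat \<Rightarrow> nat"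
  assumes c1: "c1 \<in> O(\<lambda>n. real n powr a1)" and c2: "c2 \<in> O(\<lambda>n. real n powr a2)"
    and c: "c \<in> O(\<lambda>n. real n powr a)"
    and Da: "Da \<in> O(\<lambda>n. real n powr da)" and D2: "D2 \<in> O(\<lambda>n. real n powr d2)"
    and eta: "eta \<in> O(\<lambda>n. real n powr b)" "b < 0"
    and q: "(\<lambda>n. real (q n)) \<in> O(\<lambda>n. real n powr g)" "\<forall>\<^sub>F n in sequentially. 1 \<le> q n"
    and rates: "a1 + 3 * g + da < 0" "3 * g + b < 0" "a2 + 6 * g + d2 < 0"
      "a + a1 + 3 * g + da < 0" "3 * g + a + b < 0" "a + a2 + 6 * g + d2 < 0"
  shows "(\<lambda>n. rho (zeta \<alpha> (c1 n) (c2 n) (Da n) (D2 n) (eta n) (q n)) (c n) (eta n) (q n))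
    \<longlonglongrightarrow> 0"
proof (rule rho_tendsto_zero)
  show "(\<lambda>n. zeta \<alpha> (c1 n) (c2 n) (Da n) (D2 n) (eta n) (q n)) \<longlonglongrightarrow> 0"
    by (rule zeta_tendsto_zero[OF c1 c2 Da D2 eta(1) q]) (use rates in linarith)+
  show "(\<lambda>n. c n * zeta \<alpha> (c1 n) (c2 n) (Da n) (D2 n) (eta n) (q n)) \<longlonglongrightarrow> 0"
    unfolding mult_zeta
    by (rule zeta_tendsto_zero[OF powr_bigo_mult[OF c c1] powr_bigo_mult[OF c c2] Da D2
          powr_bigo_mult[OF c eta(1)] q]) (use rates in linarith)+
  show "eta \<longlonglongrightarrow> 0"
    by (rule powr_bigo_tendsto_zero[OF eta])
qed

theorem theorem3:
  fixes p p0 M :: "nat \<Rightarrow> nat"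
    and f :: "nat \<Rightarrow> (nat \<Rightarrow> real) \<Rightarrow> real"
    and X :: "nat \<Rightarrow> nat \<Rightarrow> nat \<Rightarrow> real"
    and ft :: "nat \<Rightarrow> (nat \<Rightarrow> real) \<Rightarrow> real"
    and \<eta> :: "nat \<Rightarrow> real"
    and \<tau> :: real
    and \<gamma>0 \<gamma>1 \<gamma>2 \<gamma>3 \<gamma>4 \<gamma>5 \<gamma>6 \<gamma>7 \<gamma>8 \<gamma>9 :: real
  assumes dims: "\<forall>n\<ge>1. 1 \<le> p0 n \<and> p0 n \<le> M n \<and> p0 n < p n"
    and f_cont: "\<forall>n\<ge>1. continuous_on (cube {1..p n}) (f n)"
    and design: "\<forall>n\<ge>1. \<forall>i\<in>{1..n}. \<forall>k\<in>{1..p n}. 0 \<le> X n i k \<and> X n i k < 1"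
    and ft_cont: "\<forall>n\<ge>1. continuous_on (cube {1..p0 n}) (ft n)"
    and eta_pos: "\<forall>n\<ge>1. \<eta> n > 0"
    and tau_pos: "\<tau> > 0"
    and D2_O: "(\<lambda>n. Delta_2 (p n) n (X n)) \<in> O(\<lambda>n. real n powr (- \<gamma>0))"
    and D3_O: "(\<lambda>n. Delta_p0p1 (p n) (p0 n) n (X n)) \<in> O(\<lambda>n. real n powr (- \<gamma>0))"
    and D4_O: "(\<lambda>n. Delta_p0M1 (p n) (p0 n) (M n) n (X n)) \<in> O(\<lambda>n. real n powr (- \<gamma>0))"
    and D1_O: "(\<lambda>n. Delta_p0 (p0 n) n (X n)) \<in> O(\<lambda>n. real n powr (- \<gamma>0))"
    and eta_O: "\<eta> \<in> O(\<lambda>n. real n powr (- \<gamma>1))"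
    and V1_O: "ereal_bigO (\<lambda>n. V1 (f n) (p n) (p0 n) (ft n)) \<gamma>2"
    and V2_O: "ereal_bigO (\<lambda>n. V2 (f n) (p n) (p0 n) (M n) (ft n)) \<gamma>3"
    and C1_O: "ereal_bigO (\<lambda>n. C1 (p n) (p0 n) (ft n)) \<gamma>4"
    and C2_O: "(\<lambda>n. C2 (p n) (f n)) \<in> O(\<lambda>n. real n powr \<gamma>5)"
    and C3_O: "(\<lambda>n. C3 (f n) (p n) (p0 n) (ft n)) \<in> O(\<lambda>n. real n powr \<gamma>6)"
    and C4_O: "(\<lambda>n. C4 (f n) (p n) (p0 n) (M n) (ft n)) \<in> O(\<lambda>n. real n powr \<gamma>7)"
    and p0_O: "(\<lambda>n. real (p0 n)) \<in> O(\<lambda>n. real n powr \<gamma>8)"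
    and M_O: "(\<lambda>n. real (M n)) \<in> O(\<lambda>n. real n powr \<gamma>9)"
    and g_pos: "\<gamma>1 > 0" "\<gamma>8 > 0" "\<gamma>9 > 0"
    and g_rel: "\<gamma>8 < \<gamma>9" "3 * \<gamma>9 < \<gamma>0" "\<gamma>9 < 2 * \<gamma>1" "\<gamma>7 < \<gamma>1" "\<gamma>6 < \<gamma>1"
      "\<gamma>2 < \<gamma>0" "\<gamma>3 < \<gamma>0" "3 * \<gamma>9 + \<gamma>4 < \<gamma>0" "3 * \<gamma>9 < \<gamma>1"
      "6 * \<gamma>9 + \<gamma>5 < \<gamma>0" "3 * \<gamma>8 + \<gamma>4 + \<gamma>6 < \<gamma>0" "3 * \<gamma>8 + \<gamma>6 < \<gamma>1"
      "6 * \<gamma>8 + \<gamma>5 + \<gamma>6 < \<gamma>0" "3 * \<gamma>9 + \<gamma>4 + \<gamma>7 < \<gamma>0" "3 * \<gamma>9 + \<gamma>7 < \<gamma>1"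
      "6 * \<gamma>9 + \<gamma>5 + \<gamma>7 < \<gamma>0"
  shows "\<exists>\<alpha> D. 0 < \<alpha> \<and> \<alpha> < 1 \<and> D > 0 \<and>
    (\<forall>\<^sub>F n in sequentially.
       let D2n = Delta_2 (p n) n (X n);
           D1n = Delta_p0 (p0 n) n (X n);
           D3n = Delta_p0p1 (p n) (p0 n) n (X n);
           D4n = Delta_p0M1 (p n) (p0 n) (M n) n (X n);
           c1 = real_of_ereal (C1 (p n) (p0 n) (ft n));
           c2 = C2 (p n) (f n);
           c3 = C3 (f n) (p n) (p0 n) (ft n);
           c4 = C4 (f n) (p n) (p0 n) (M n) (ft n);
           v1 = real_of_ereal (V1 (f n) (p n) (p0 n) (ft n));
           v2 = real_of_ereal (V2 (f n) (p n) (p0 n) (M n) (ft n));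
           z1 = zeta \<alpha> c1 c2 D1n D2n (\<eta> n) (p0 n);
           z2 = zeta \<alpha> c1 c2 D3n D2n (\<eta> n) (M n);
           r1 = rho z1 c3 (\<eta> n) (p0 n);
           r2 = rho z2 c4 (\<eta> n) (M n)
       in 3 * (real (M n) + 1)^2 * (9 * real (M n) + 1) * D2n < \<alpha> \<and>
          12 * \<tau>^2 - 12 * (real (M n) - real (p0 n) + 1) * (\<eta> n)^2 - 4 * (\<eta> n)^2
            - 4 * \<eta> n * (c4 + c3) - D1n * v1 - D4n * v2 - r1 - r2 > D)"
proof -
  let ?D1 = "\<lambda>n. Delta_p0 (p0 n) n (X n)" and ?D2 = "\<lambda>n. Delta_2 (p n) n (X n)"
    and ?D3 = "\<lambda>n. Delta_p0p1 (p n) (p0 n) n (X n)" and ?D4 = "\<lambda>n. Delta_p0M1 (p n) (p0 n) (M n) n (X n)"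
    and ?c1 = "\<lambda>n. real_of_ereal (C1 (p n) (p0 n) (ft n))" and ?c2 = "\<lambda>n. C2 (p n) (f n)"
    and ?c3 = "\<lambda>n. C3 (f n) (p n) (p0 n) (ft n)" and ?c4 = "\<lambda>n. C4 (f n) (p n) (p0 n) (M n) (ft n)"
    and ?v1 = "\<lambda>n. real_of_ereal (V1 (f n) (p n) (p0 n) (ft n))"
    and ?v2 = "\<lambda>n. real_of_ereal (V2 (f n) (p n) (p0 n) (M n) (ft n))"
  have p0_ge_1: "\<forall>\<^sub>F n in sequentially. 1 \<le> p0 n" and M_ge_1: "\<forall>\<^sub>F n in sequentially. 1 \<le> M n"
    using dims by (auto intro!: eventually_sequentiallyI[of 1] intro: order_trans)
  have "(\<lambda>n. real (M n) - real (p0 n) + 1) \<in> O(\<lambda>n. real (M n))"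
    using dims by (intro landau_o.bigI[of 1] eventually_sequentiallyI[of 1]) auto
  then have "(\<lambda>n. (real (M n) - real (p0 n) + 1) * (\<eta> n * \<eta> n)) \<longlonglongrightarrow> 0"
    by (rule powr_bigo_mult_tendsto_zero[OF landau_o.big_trans[OF _ M_O] powr_bigo_mult[OF eta_O eta_O]])
      (use g_rel in linarith)
  moreover have "(\<lambda>n. \<eta> n * \<eta> n) \<longlonglongrightarrow> 0" "(\<lambda>n. \<eta> n * ?c3 n) \<longlonglongrightarrow> 0"
    "(\<lambda>n. \<eta> n * ?c4 n) \<longlonglongrightarrow> 0"
    using g_pos g_rel by (auto intro: powr_bigo_mult_tendsto_zero[OF eta_O] eta_O C3_O C4_O)
  moreover have "(\<lambda>n. ?D1 n * ?v1 n) \<longlonglongrightarrow> 0"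
    by (rule powr_bigo_mult_tendsto_zero[OF D1_O ereal_bigO_imp_bigo[OF V1_O]]) (use g_rel in linarith)
  moreover have "(\<lambda>n. ?D4 n * ?v2 n) \<longlonglongrightarrow> 0"
    by (rule powr_bigo_mult_tendsto_zero[OF D4_O ereal_bigO_imp_bigo[OF V2_O]]) (use g_rel in linarith)
  moreover have "(\<lambda>n. rho (zeta (1/2) (?c1 n) (?c2 n) (?D1 n) (?D2 n) (\<eta> n) (p0 n)) (?c3 n) (\<eta> n) (p0 n))
      \<longlonglongrightarrow> 0"
    by (rule rho_zeta_tendsto_zero[OF ereal_bigO_imp_bigo[OF C1_O] C2_O C3_O D1_O D2_O eta_O _ p0_O p0_ge_1])
      (use g_pos g_rel in linarith)+
  moreover have "(\<lambda>n. rho (zeta (1/2) (?c1 n) (?c2 n) (?D3 n) (?D2 n) (\<eta> n) (M n)) (?c4 n) (\<eta> n) (M n))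
      \<longlonglongrightarrow> 0"
    by (rule rho_zeta_tendsto_zero[OF ereal_bigO_imp_bigo[OF C1_O] C2_O C4_O D3_O D2_O eta_O _ M_O M_ge_1])
      (use g_pos g_rel in linarith)+
  ultimately have err: "(\<lambda>n. 12 * ((real (M n) - real (p0 n) + 1) * (\<eta> n * \<eta> n)) + 4 * (\<eta> n * \<eta> n)
      + 4 * (\<eta> n * ?c4 n) + 4 * (\<eta> n * ?c3 n) + ?D1 n * ?v1 n + ?D4 n * ?v2 n
      + rho (zeta (1/2) (?c1 n) (?c2 n) (?D1 n) (?D2 n) (\<eta> n) (p0 n)) (?c3 n) (\<eta> n) (p0 n)
      + rho (zeta (1/2) (?c1 n) (?c2 n) (?D3 n) (?D2 n) (\<eta> n) (M n)) (?c4 n) (\<eta> n) (M n)) \<longlonglongrightarrow> 0"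
    by (intro tendsto_add_zero tendsto_mult_right_zero)
  have crit: "(\<lambda>n. 3 * (zeta_factor (M n) * ?D2 n)) \<longlonglongrightarrow> 0"
    by (intro tendsto_mult_right_zero powr_bigo_mult_tendsto_zero[OF zeta_factor_bigo[OF M_O M_ge_1] D2_O])
      (use g_rel in linarith)
  have pos: "(0::real) < 1/2" "0 < 6 * \<tau>^2"
    using tau_pos by simp_all
  show ?thesis
    using eventually_conj[OF order_tendstoD(2)[OF crit pos(1)] order_tendstoD(2)[OF err pos(2)]] pos
    by (intro exI[of _ "1/2"] exI[of _ "6 * \<tau>^2"] conjI)
      (auto elim!: eventually_mono simp: Let_def zeta_factor_def power2_eq_square algebra_simps)
qed

end
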